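(* Let $a,b$ be as in the context and let $w=(w_n)_{n\ge0}$ be a sequence of complex numbers. If $$\sup_{n\ge0}\Big|\frac{w_na_n}{a_{n+1}}\Big|<\infty\quad\text{and}\quad\limsup_{n\to\infty}\Big|\frac{b_n}{a_{n+1}}\Big|<1,$$ then, with $c_n:=w_{n+1}\frac{b_n}{a_{n+2}}-w_n\frac{a_n}{a_{n+1}}\frac{b_{n+1}}{a_{n+2}}$, one has $\sup_{n\ge0}|c_n|<\infty$ and $\sum_{n=3}^{\infty}\sup_{j\ge0}\big|c_j\prod_{k=3}^{n}\frac{b_{j+k-1}}{a_{j+k}}\big|<\infty$; consequently $F_w$ is a bounded operator on $\ell^p_{a,b}$ for every $1\le p<\infty$ and on $c_{0,a,b}$.
   Context: Let $a=(a_n)_{n\ge0}$, $b=(b_n)_{n\ge0}$ be sequences of nonzero complex numbers with $\limsup_{n\to\infty}(|a_n|+|b_n|)^{1/n}<\infty$, and let $R=1/\limsup_{n}(|a_n|+|b_n|)^{1/n}\in(0,\infty]$. For $n\ge0$ let $f_n(z)=(a_n+b_nz)z^n$. For $1\le p<\infty$, $\ell^p_{a,b}$ is the space of analytic functions on $\{|z|<R\}$ of the form $f=\sum_{n\ge0}\lambda_nf_n$ with $(\lambda_n)\in\ell^p(\mathbb{N}_0)$ (the series converges locally uniformly on $\{|z|<R\}$ and the $\lambda_n$ are uniquely determined by $f$), normed by $\|f\|=(\sum_n|\lambda_n|^p)^{1/p}$; thus $\{f_n\}$ is a normalized Schauder basis equivalent to the standard basis of $\ell^p(\mathbb{N}_0)$.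 The space $c_{0,a,b}$ is defined in the same way with $(\lambda_n)\in c_0(\mathbb{N}_0)$ and norm $\sup_n|\lambda_n|$. For a sequence $w=(w_n)_{n\ge0}$, the weighted forward shift is $F_w\big(\sum_{n\ge0}\mu_nz^n\big)=\sum_{n\ge0}\mu_nw_nz^{n+1}$ (acting on power series); "bounded on $X$" means $F_w$ maps $X$ into $X$ and is a bounded operator. *)

theory Defs
  imports "HOL-Analysis.Analysis"
begin

definition fab :: "(nat \<Rightarrow> complex) \<Rightarrow> (nat \<Rightarrow> complex) \<Rightarrow> nat \<Rightarrow> complex \<Rightarrow> complex" where
  "fab a b n z = (a n + b n * z) * z ^ n"

definition growth_ab :: "(nat \<Rightarrow> complex) \<Rightarrow> (nat \<Rightarrow> complex) \<Rightarrow> ereal" where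
  "growth_ab a b = limsup (\<lambda>n. ereal (root n (cmod (a n) + cmod (b n))))"

text \<open>The disc {|z| < R}, R = 1 / limsup (assumed finite limsup, so this is a real number L >= 0
  and the disc is {z. |z| * L < 1}, which is all of C when L = 0).\<close>
definition disc_ab :: "(nat \<Rightarrow> complex) \<Rightarrow> (nat \<Rightarrow> complex) \<Rightarrow> complex set" where
  "disc_ab a b = {z. cmod z * real_of_ereal (growth_ab a b) < 1}"

definition represents_ab ::
  "(nat \<Rightarrow> complex) \<Rightarrow> (nat \<Rightarrow> complex) \<Rightarrow> (nat \<Rightarrow> complex) \<Rightarrow> (complex \<Rightarrow> complex) \<Rightarrow> bool" where
  "represents_ab a b lam f \<longleftrightarrow> (\<forall>z \<in> disc_ab a b. (\<lambda>n. lam n * fab a b n z) sums f z)"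

definition in_lp :: "real \<Rightarrow> (nat \<Rightarrow> complex) \<Rightarrow> bool" where
  "in_lp p lam \<longleftrightarrow> summable (\<lambda>n. cmod (lam n) powr p)"

definition lp_norm :: "real \<Rightarrow> (nat \<Rightarrow> complex) \<Rightarrow> real" where
  "lp_norm p lam = (\<Sum>n. cmod (lam n) powr p) powr (1 / p)"

definition in_c0 :: "(nat \<Rightarrow> complex) \<Rightarrow> bool" where
  "in_c0 lam \<longleftrightarrow> lam \<longlonglongrightarrow> 0"

definition sup_norm :: "(nat \<Rightarrow> complex) \<Rightarrow> real" where
  "sup_norm lam = (SUP n. cmod (lam n))"

definition taylor_coeff :: "(complex \<Rightarrow> complex) \<Rightarrow> nat \<Rightarrow> complex" where
  "taylor_coeff f m = (deriv ^^ m) f 0 / fact m"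

text \<open>g is F_w f: the power series of g is sum mu_n w_n z^(n+1), where sum mu_n z^n is that of f.\<close>
definition is_shift_image :: "(nat \<Rightarrow> complex) \<Rightarrow> (complex \<Rightarrow> complex) \<Rightarrow> (complex \<Rightarrow> complex) \<Rightarrow> bool" where
  "is_shift_image w f g \<longleftrightarrow>
     (\<forall>m. taylor_coeff g m = (if m = 0 then 0 else w (m - 1) * taylor_coeff f (m - 1)))"

definition shift_bounded_lp :: "real \<Rightarrow> (nat \<Rightarrow> complex) \<Rightarrow> (nat \<Rightarrow> complex) \<Rightarrow> (nat \<Rightarrow> complex) \<Rightarrow> bool" where
  "shift_bounded_lp p a b w \<longleftrightarrow>
     (\<exists>C. \<forall>lam f. in_lp p lam \<and> represents_ab a b lam f \<longrightarrow>
        (\<exists>lam' g. in_lp p lam' \<and> represents_ab a b lam' g \<and> is_shift_image w f g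
                 \<and> lp_norm p lam' \<le> C * lp_norm p lam))"

definition shift_bounded_c0 :: "(nat \<Rightarrow> complex) \<Rightarrow> (nat \<Rightarrow> complex) \<Rightarrow> (nat \<Rightarrow> complex) \<Rightarrow> bool" where
  "shift_bounded_c0 a b w \<longleftrightarrow>
     (\<exists>C. \<forall>lam f. in_c0 lam \<and> represents_ab a b lam f \<longrightarrow>
        (\<exists>lam' g. in_c0 lam' \<and> represents_ab a b lam' g \<and> is_shift_image w f g
                 \<and> sup_norm lam' \<le> C * sup_norm lam))"

end

theory Submission
  imports Defs
begin

text \<open>Writing \<open>f = (\<Sum>n. lam n * fab a b n z)\<close>, the Taylor coefficients of \<open>f\<close> are
  \<open>\<mu> m = lam m * a m + lam (m - 1) * b (m - 1)\<close>. Hence \<open>F_w f = (\<Sum>n. x n * fab a b n z)\<close> forces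
  \<open>x 0 = 0\<close> and \<open>x (m + 1) = (w m * \<mu> m - b m * x m) / a (m + 1)\<close>, a first-order recursion whose
  multiplier \<open>b m / a (m + 1)\<close> is eventually below some \<open>q < 1\<close> in modulus. So \<open>\<bar>x m\<bar>\<close> is
  dominated, up to a constant, by the geometric smoothing \<open>\<Sum>k<m. q ^ (m - 1 - k) * y k\<close> of
  \<open>y m = max \<bar>lam m\<bar> \<bar>lam (m - 1)\<bar>\<close>, and this smoothing preserves \<open>c\<^sub>0\<close> and, by
  convexity of \<open>t powr p\<close>, \<open>\<ell>\<^sup>p\<close>. The same two bounds (on \<open>w n * a n / a (n + 1)\<close> and on the
  eventually geometric products of \<open>b k / a (k + 1)\<close>) give the estimates for \<open>c\<close>.\<close>

lemma powr_convex_combination_le: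
  fixes q x y p :: real
  assumes q: "0 < q" "q < 1" and p: "1 \<le> p" and x: "0 \<le> x" and y: "0 \<le> y"
  shows "(q * x + (1 - q) * y) powr p \<le> q * x powr p + (1 - q) * y powr p"
proof -
  have scaled: "(t * z) powr p \<le> t * z powr p" if "0 \<le> t" "t \<le> 1" "0 \<le> z" for t z :: real
  proof -
    have "t powr p \<le> t powr 1" using that p by (intro powr_mono') auto
    then show ?thesis using that by (simp add: powr_mult mult_right_mono)
  qed
  consider "x = 0" | "y = 0" | "x > 0" "y > 0" using x y by linarith
  then show ?thesis
  proof cases
    case 1 then show ?thesis using scaled[of "1 - q" y] q y p by simp
  next
    case 2 then show ?thesis using scaled[of q x] q x p by simp
  next
    case 3
    then show ?thesis
      using convex_onD[OF powr_convex[OF p], of "1 - q" x y] q by (simp add: algebra_simps)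
  qed
qed

text \<open>\<open>damped_sum q y m = (\<Sum>k<m. q ^ (m - 1 - k) * y k)\<close>, the output of a geometric filter.\<close>
primrec damped_sum :: "real \<Rightarrow> (nat \<Rightarrow> real) \<Rightarrow> nat \<Rightarrow> real" where
  "damped_sum q y 0 = 0"
| "damped_sum q y (Suc m) = q * damped_sum q y m + y m"

lemma damped_sum_nonneg:
  assumes "0 \<le> q" "\<And>m. 0 \<le> y m"
  shows "0 \<le> damped_sum q y m"
  by (induction m) (use assms in auto)

lemma damped_sum_le:
  assumes q: "0 \<le> q" "q < 1" and y: "\<And>m. 0 \<le> y m" "\<And>m. y m \<le> B"
  shows "damped_sum q y m \<le> B / (1 - q)"
proof (induction m)
  case 0
  show ?case using y[of 0] q by simp
next
  case (Suc m)
  have "damped_sum q y (Suc m) \<le> q * (B / (1 - q)) + B"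
    using Suc y(2)[of m] mult_left_mono[OF Suc q(1)] by simp
  also have "\<dots> = B / (1 - q)" using q by (simp add: field_simps)
  finally show ?case .
qed

lemma damped_sum_tendsto_zero:
  assumes q: "0 < q" "q < 1" and y: "\<And>m. 0 \<le> y m" "y \<longlonglongrightarrow> 0"
  shows "damped_sum q y \<longlonglongrightarrow> 0"
proof (rule LIMSEQ_I)
  fix e :: real assume e: "0 < e"
  have T0: "0 \<le> damped_sum q y m" for m using damped_sum_nonneg[of q y] q y by auto
  from LIMSEQ_D[OF y(2), of "e * (1 - q) / 2"] e q obtain N
    where "\<forall>n\<ge>N. norm (y n - 0) < e * (1 - q) / 2" by auto
  then have N: "\<And>n. N \<le> n \<Longrightarrow> y n < e * (1 - q) / 2" using y(1) by simp
  have tail: "damped_sum q y (N + k) \<le> q ^ k * damped_sum q y N + e / 2" for k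
  proof (induction k)
    case (Suc k)
    have "damped_sum q y (N + Suc k) = q * damped_sum q y (N + k) + y (N + k)" by simp
    also have "\<dots> \<le> q * (q ^ k * damped_sum q y N + e / 2) + e * (1 - q) / 2"
      using Suc N[of "N + k"] q by (intro add_mono mult_left_mono) auto
    also have "\<dots> = q ^ Suc k * damped_sum q y N + e / 2" by (simp add: field_simps)
    finally show ?case .
  qed (use e in simp)
  have "(\<lambda>k. q ^ k * damped_sum q y N) \<longlonglongrightarrow> 0"
    using q by (intro tendsto_mult_left_zero LIMSEQ_power_zero) auto
  from LIMSEQ_D[OF this, of "e / 2"] e obtain K
    where K: "\<And>k. K \<le> k \<Longrightarrow> q ^ k * damped_sum q y N < e / 2" using T0 q by auto
  have "norm (damped_sum q y n - 0) < e" if "N + K \<le> n" for n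
  proof -
    have "K \<le> n - N" "N + (n - N) = n" using that by auto
    then show ?thesis using tail[of "n - N"] K[of "n - N"] T0[of n] by simp
  qed
  then show "\<exists>n0. \<forall>n\<ge>n0. norm (damped_sum q y n - 0) < e" by blast
qed

lemma sum_damped_sum_powr_le:
  assumes q: "0 < q" "q < 1" and p: "1 \<le> p" and y: "\<And>m. 0 \<le> y m"
    and Y: "\<And>n. (\<Sum>m<n. y m powr p) \<le> Y"
  shows "(\<Sum>m<n. damped_sum q y m powr p) \<le> Y / (1 - q) powr p"
proof -
  let ?T = "damped_sum q y"
  define Z where "Z = Y / (1 - q) powr p"
  have T0: "0 \<le> ?T m" for m using damped_sum_nonneg[of q y] q y by auto
  \<comment> \<open>\<open>?T (Suc m)\<close> is a convex combination of \<open>?T m\<close> and \<open>y m / (1 - q)\<close>.\<close>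
  have step: "?T (Suc m) powr p \<le> q * ?T m powr p + (1 - q) * (y m powr p / (1 - q) powr p)" for m
  proof -
    have "?T (Suc m) = q * ?T m + (1 - q) * (y m / (1 - q))" using q by simp
    then have "?T (Suc m) powr p \<le> q * ?T m powr p + (1 - q) * (y m / (1 - q)) powr p"
      using powr_convex_combination_le[OF q p T0[of m], of "y m / (1 - q)"] y[of m] q by simp
    then show ?thesis using y[of m] q by (simp add: powr_divide)
  qed
  have "(\<Sum>m<n. ?T m powr p) \<le> (\<Sum>m<n. ?T (Suc m) powr p)"
  proof (cases n)
    case (Suc k)
    have "(\<Sum>m<n. ?T m powr p) = (\<Sum>m<k. ?T (Suc m) powr p)"
      using p unfolding Suc sum.lessThan_Suc_shift by (simp del: damped_sum.simps(2))
    then show ?thesis using Suc by (simp del: damped_sum.simps(2))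
  qed simp
  also have "\<dots> \<le> (\<Sum>m<n. q * ?T m powr p + (1 - q) * (y m powr p / (1 - q) powr p))"
    by (intro sum_mono step)
  also have "\<dots> = q * (\<Sum>m<n. ?T m powr p) + (1 - q) * ((\<Sum>m<n. y m powr p) / (1 - q) powr p)"
    by (simp add: sum.distrib sum_distrib_left sum_divide_distrib)
  also have "\<dots> \<le> q * (\<Sum>m<n. ?T m powr p) + (1 - q) * Z"
    unfolding Z_def using Y[of n] q by (intro add_left_mono mult_left_mono divide_right_mono) auto
  finally have "(1 - q) * (\<Sum>m<n. ?T m powr p) \<le> (1 - q) * Z" by (simp add: algebra_simps)
  then have "(\<Sum>m<n. ?T m powr p) \<le> Z" by (rule mult_left_le_imp_le[of "1 - q"]) (use q in auto)
  then show ?thesis unfolding Z_def .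
qed

lemma limsup_less_one_obtains_bounds:
  fixes \<rho> :: "nat \<Rightarrow> real"
  assumes \<rho>0: "\<And>k. 0 \<le> \<rho> k" and lim: "limsup (\<lambda>k. ereal (\<rho> k)) < 1"
  obtains q N M where "0 < q" "q < 1" "\<And>k. N \<le> k \<Longrightarrow> \<rho> k \<le> q" "\<And>k. \<rho> k \<le> M" "q \<le> M"
proof -
  obtain q0 :: real where q0: "limsup (\<lambda>k. ereal (\<rho> k)) < q0" "q0 < 1"
    using ereal_dense2[OF lim] by auto
  define q where "q = max q0 (1 / 2)" \<comment> \<open>only to make \<open>q\<close> positive\<close>
  have q: "0 < q" "q < 1" using q0(2) unfolding q_def by auto
  have "limsup (\<lambda>k. ereal (\<rho> k)) < ereal q"
    using q0(1) unfolding q_def by (meson ereal_less_eq(3) max.cobounded1 order_less_le_trans)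
  from Limsup_lessD[OF this] obtain N where "\<And>k. N \<le> k \<Longrightarrow> \<rho> k < q"
    unfolding eventually_sequentially by auto
  then have rq: "\<And>k. N \<le> k \<Longrightarrow> \<rho> k \<le> q" by (simp add: less_imp_le)
  define M where "M = q + (\<Sum>k<N. \<rho> k)"
  have "\<rho> k \<le> M" for k
  proof (cases "k < N")
    case True
    then have "\<rho> k \<le> (\<Sum>k<N. \<rho> k)" using \<rho>0 by (intro member_le_sum) auto
    then show ?thesis unfolding M_def using q by simp
  next
    case False
    then show ?thesis using rq[of k] \<rho>0 unfolding M_def by (simp add: sum_nonneg add_increasing2)
  qed
  moreover have "q \<le> M" unfolding M_def using \<rho>0 by (simp add: sum_nonneg)
  ultimately show ?thesis using that q rq by blast
qed

lemma prod_le_if_eventually_le: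
  fixes \<rho> :: "nat \<Rightarrow> real"
  assumes \<rho>0: "\<And>k. 0 \<le> \<rho> k" and \<rho>q: "\<And>k. N \<le> k \<Longrightarrow> \<rho> k \<le> q" and \<rho>M: "\<And>k. \<rho> k \<le> M"
    and q: "0 < q" "q \<le> M"
  shows "(\<Prod>k<n. \<rho> (j + k)) \<le> (M / q) ^ N * q ^ n"
proof -
  define G where "G = M / q"
  have G1: "1 \<le> G" using q unfolding G_def by simp
  have "(\<Prod>k<n. \<rho> (j + k)) \<le> G ^ min n N * q ^ n"
  proof (induction n)
    case (Suc n)
    have "(\<Prod>k<Suc n. \<rho> (j + k)) \<le> G ^ min n N * q ^ n * \<rho> (j + n)"
      using Suc \<rho>0 by (simp add: mult_right_mono)
    also have "\<dots> \<le> G ^ min (Suc n) N * q ^ Suc n"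
    proof (cases "n < N")
      case True
      have "\<rho> (j + n) \<le> G * q" using \<rho>M q unfolding G_def by simp
      then show ?thesis using True G1 q by (simp add: mult_left_mono mult_ac)
    next
      case False
      have "G ^ min n N \<le> G ^ min (Suc n) N" using G1 by (intro power_increasing) auto
      then have "G ^ min n N * q ^ n * \<rho> (j + n) \<le> G ^ min (Suc n) N * q ^ n * q"
        using False G1 q \<rho>0 \<rho>q[of "j + n"] by (intro mult_mono) auto
      then show ?thesis by (simp add: mult_ac)
    qed
    finally show ?case .
  qed simp
  also have "\<dots> \<le> G ^ N * q ^ n" using G1 q by (intro mult_right_mono power_increasing) auto
  finally show ?thesis unfolding G_def .
qed

lemma norm_le_damped_sum_if_recursive:
  fixes x :: "nat \<Rightarrow> 'a::real_normed_vector" and \<rho> y :: "nat \<Rightarrow> real"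
  assumes x0: "x 0 = 0" and xSuc: "\<And>m. norm (x (Suc m)) \<le> \<rho> m * norm (x m) + D * y m"
    and y0: "\<And>m. 0 \<le> y m" and D: "0 \<le> D"
    and \<rho>0: "\<And>k. 0 \<le> \<rho> k" and \<rho>q: "\<And>k. N \<le> k \<Longrightarrow> \<rho> k \<le> q" and \<rho>M: "\<And>k. \<rho> k \<le> M"
    and q: "0 < q" "q \<le> M"
  shows "norm (x m) \<le> (M / q) ^ N * D * damped_sum q y m"
proof -
  define G where "G = M / q"
  have G1: "1 \<le> G" using q unfolding G_def by simp
  have T0: "0 \<le> damped_sum q y m" for m using damped_sum_nonneg[of q y] q y0 by auto
  have Dy: "D * y m \<le> G ^ k * D * y m" for k m
    using mult_right_mono[OF one_le_power[OF G1, of k], of "D * y m"] D y0[of m] by (simp add: mult_ac)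
  \<comment> \<open>Each of the first \<open>N\<close> steps may exceed the rate \<open>q\<close>, by at most the factor \<open>G\<close>.\<close>
  have "norm (x m) \<le> G ^ min m N * D * damped_sum q y m"
  proof (induction m)
    case (Suc m)
    have "norm (x (Suc m)) \<le> \<rho> m * (G ^ min m N * D * damped_sum q y m) + D * y m"
      using xSuc[of m] mult_left_mono[OF Suc \<rho>0[of m]] by linarith
    also have "\<dots> \<le> G ^ min (Suc m) N * D * damped_sum q y (Suc m)"
    proof (cases "m < N")
      case True
      have "\<rho> m \<le> G * q" using \<rho>M q unfolding G_def by simp
      then have "\<rho> m * (G ^ min m N * D * damped_sum q y m) \<le> (G * q) * (G ^ min m N * D * damped_sum q y m)"
        using G1 D T0[of m] by (intro mult_right_mono) auto
      then show ?thesis using True Dy[of m "Suc m"] by (simp add: algebra_simps)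
    next
      case False
      then have "\<rho> m * (G ^ N * D * damped_sum q y m) \<le> q * (G ^ N * D * damped_sum q y m)"
        using \<rho>q[of m] G1 D T0[of m] by (intro mult_right_mono) auto
      then show ?thesis using False Dy[of m N] by (simp add: algebra_simps)
    qed
    finally show ?case .
  qed (simp add: x0)
  also have "\<dots> \<le> G ^ N * D * damped_sum q y m"
    using G1 D T0[of m] by (intro mult_right_mono power_increasing) auto
  finally show ?thesis unfolding G_def .
qed

text \<open>The Taylor coefficients of \<open>\<Sum>n. lam n * fab a b n z\<close>.\<close>
definition ab_coeffs :: "(nat \<Rightarrow> complex) \<Rightarrow> (nat \<Rightarrow> complex) \<Rightarrow> (nat \<Rightarrow> complex) \<Rightarrow> nat \<Rightarrow> complex" where
  "ab_coeffs a b lam m = lam m * a m + (if m = 0 then 0 else lam (m - 1) * b (m - 1))"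

lemma growth_ab_real:
  assumes "growth_ab a b < \<infinity>"
  shows "growth_ab a b = ereal (real_of_ereal (growth_ab a b))" "0 \<le> real_of_ereal (growth_ab a b)"
proof -
  have "0 \<le> growth_ab a b" unfolding growth_ab_def
    by (intro le_Limsup) (auto simp: real_root_ge_zero)
  then show "growth_ab a b = ereal (real_of_ereal (growth_ab a b))" "0 \<le> real_of_ereal (growth_ab a b)"
    using assms by (cases "growth_ab a b"; auto)+
qed

lemma summable_in_disc_ab:
  assumes growth: "growth_ab a b < \<infinity>" and z: "z \<in> disc_ab a b"
  shows "summable (\<lambda>n. (cmod (a n) + cmod (b n)) * cmod z ^ n)"
proof -
  define L where "L = real_of_ereal (growth_ab a b)"
  have L: "growth_ab a b = ereal L" "0 \<le> L" using growth_ab_real[OF growth] unfolding L_def by auto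
  have radius: "conv_radius (\<lambda>n. cmod (a n) + cmod (b n)) = inverse (ereal L)"
    unfolding conv_radius_def L(1)[symmetric] growth_ab_def by simp
  have "cmod z * L < 1" using z unfolding disc_ab_def L_def by simp
  then have "ereal (norm (cmod z)) < conv_radius (\<lambda>n. cmod (a n) + cmod (b n))"
    using L(2) by (cases "L = 0") (auto simp: radius field_simps)
  from abs_summable_in_conv_radius[OF this] show ?thesis by (simp add: abs_mult)
qed

lemma ball_subset_disc_ab:
  assumes growth: "growth_ab a b < \<infinity>"
  obtains d where "0 < d" "ball 0 d \<subseteq> disc_ab a b"
proof
  define L where "L = real_of_ereal (growth_ab a b)"
  have L: "0 \<le> L" using growth_ab_real[OF growth] unfolding L_def by auto
  show "0 < 1 / (L + 1)" using L by simp
  show "ball 0 (1 / (L + 1)) \<subseteq> disc_ab a b"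
  proof
    fix z :: complex assume "z \<in> ball 0 (1 / (L + 1))"
    then have "cmod z * (L + 1) < 1" using L by (simp add: field_simps)
    moreover have "cmod z * L \<le> cmod z * (L + 1)" by (intro mult_left_mono) auto
    ultimately show "z \<in> disc_ab a b" unfolding disc_ab_def L_def by simp
  qed
qed

lemma summable_norm_fab_parts:
  assumes growth: "growth_ab a b < \<infinity>" and z: "z \<in> disc_ab a b" and B: "\<And>n. cmod (lam n) \<le> B"
  shows "summable (\<lambda>n. norm (lam n * a n * z ^ n))" "summable (\<lambda>n. norm (lam n * b n * z ^ Suc n))"
proof -
  define majorant where "majorant n = B * (1 + cmod z) * ((cmod (a n) + cmod (b n)) * cmod z ^ n)" for n
  have B0: "0 \<le> B" using B[of 0] norm_ge_zero order_trans by blast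
  have majorant: "summable majorant"
    unfolding majorant_def[abs_def] by (intro summable_mult summable_in_disc_ab[OF growth z])
  have "norm (lam n * a n * z ^ n) \<le> majorant n" for n
  proof -
    have "norm (lam n * a n * z ^ n) = cmod (lam n) * (cmod (a n) * cmod z ^ n)"
      by (simp add: norm_mult norm_power mult.assoc)
    also have "\<dots> \<le> B * ((cmod (a n) + cmod (b n)) * cmod z ^ n)"
      using B[of n] B0 by (intro mult_mono mult_right_mono) auto
    also have "\<dots> \<le> majorant n"
      unfolding majorant_def using B0 by (intro mult_right_mono) (auto simp: distrib_left)
    finally show ?thesis .
  qed
  then show "summable (\<lambda>n. norm (lam n * a n * z ^ n))"
    by (intro summable_norm_comparison_test[OF _ majorant]) blast
  have "norm (lam n * b n * z ^ Suc n) \<le> majorant n" for n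
  proof -
    have "norm (lam n * b n * z ^ Suc n) = cmod (lam n) * (cmod (b n) * cmod z ^ n) * cmod z"
      by (simp add: norm_mult norm_power mult_ac)
    also have "\<dots> \<le> B * ((cmod (a n) + cmod (b n)) * cmod z ^ n) * cmod z"
      using B[of n] B0 by (intro mult_mono mult_right_mono) auto
    also have "\<dots> \<le> B * ((cmod (a n) + cmod (b n)) * cmod z ^ n) * (1 + cmod z)"
      using B0 by (intro mult_left_mono) auto
    also have "\<dots> = majorant n"
      unfolding majorant_def by (simp only: mult_ac)
    finally show ?thesis .
  qed
  then show "summable (\<lambda>n. norm (lam n * b n * z ^ Suc n))"
    by (intro summable_norm_comparison_test[OF _ majorant]) blast
qed

lemma represents_ab_suminf:
  assumes growth: "growth_ab a b < \<infinity>" and B: "\<And>n. cmod (lam n) \<le> B"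
  shows "represents_ab a b lam (\<lambda>z. \<Sum>n. lam n * fab a b n z)"
  unfolding represents_ab_def
proof
  fix z assume z: "z \<in> disc_ab a b"
  note parts = summable_norm_fab_parts[where lam = lam, OF growth z B]
  have "norm (lam n * fab a b n z) \<le> norm (lam n * a n * z ^ n) + norm (lam n * b n * z ^ Suc n)" for n
  proof -
    have "lam n * fab a b n z = lam n * a n * z ^ n + lam n * b n * z ^ Suc n"
      by (simp add: fab_def algebra_simps)
    then show ?thesis by (simp only: norm_triangle_ineq)
  qed
  then have "summable (\<lambda>n. norm (lam n * fab a b n z))"
    by (intro summable_norm_comparison_test[OF _ summable_add[OF parts]]) blast
  then show "(\<lambda>n. lam n * fab a b n z) sums (\<Sum>n. lam n * fab a b n z)"
    by (rule summable_sums[OF summable_norm_cancel])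
qed

lemma ab_coeffs_sums:
  assumes growth: "growth_ab a b < \<infinity>" and B: "\<And>n. cmod (lam n) \<le> B"
    and r: "represents_ab a b lam f" and z: "z \<in> disc_ab a b"
  shows "(\<lambda>m. ab_coeffs a b lam m * z ^ m) sums f z"
proof -
  note parts = summable_norm_fab_parts[where lam = lam, OF growth z B]
  obtain s1 s2 where s1: "(\<lambda>n. lam n * a n * z ^ n) sums s1" and s2: "(\<lambda>n. lam n * b n * z ^ Suc n) sums s2"
    using summable_sums[OF summable_norm_cancel[OF parts(1)]] summable_sums[OF summable_norm_cancel[OF parts(2)]]
    by blast
  have "(\<lambda>n. lam n * a n * z ^ n + lam n * b n * z ^ Suc n) sums (s1 + s2)" by (rule sums_add[OF s1 s2])
  moreover have "(\<lambda>n. lam n * fab a b n z) sums f z" using r z unfolding represents_ab_def by auto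
  ultimately have fz: "f z = s1 + s2"
    by (simp add: fab_def distrib_left distrib_right mult.assoc sums_unique2)
  define h where "h m = (if m = 0 then 0 else lam (m - 1) * b (m - 1)) * z ^ m" for m
  have "h sums s2" using s2 sums_Suc_iff[of h s2] by (simp add: h_def)
  from sums_add[OF s1 this] show ?thesis
    unfolding fz by (simp add: h_def ab_coeffs_def distrib_right)
qed

lemma taylor_coeff_eq_ab_coeffs:
  assumes growth: "growth_ab a b < \<infinity>" and B: "\<And>n. cmod (lam n) \<le> B"
    and r: "represents_ab a b lam f"
  shows "taylor_coeff f m = ab_coeffs a b lam m"
proof -
  obtain d where d: "0 < d" "ball 0 d \<subseteq> disc_ab a b" using ball_subset_disc_ab[OF growth] by blast
  define F where "F = Abs_fps (ab_coeffs a b lam)"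
  have "complex_of_real (d / 2) \<in> disc_ab a b" using d by auto
  from conv_radius_geI[OF sums_summable[OF ab_coeffs_sums[OF growth B r this]]]
  have "fps_conv_radius F \<ge> d / 2"
    unfolding F_def fps_conv_radius_def using d by simp
  then have "fps_conv_radius F > 0" using d
    by (metis ereal_less(2) half_gt_zero order_less_le_trans)
  moreover have "eventually (\<lambda>z. eval_fps F z = f z) (nhds 0)"
  proof (rule eventually_mono)
    show "eventually (\<lambda>z. z \<in> ball 0 d) (nhds (0::complex))"
      using d by (intro eventually_nhds_in_open) auto
    fix z assume "z \<in> ball (0::complex) d"
    with d ab_coeffs_sums[OF growth B r] show "eval_fps F z = f z"
      unfolding eval_fps_def F_def by (auto simp: sums_iff)
  qed
  ultimately have "f has_fps_expansion F" unfolding has_fps_expansion_def by auto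
  from fps_nth_fps_expansion[OF this, of m] show ?thesis
    unfolding taylor_coeff_def F_def by simp
qed

text \<open>The coefficients of the image under \<open>F_w\<close>: the unique solution of
  \<open>ab_coeffs a b x (Suc m) = w m * ab_coeffs a b lam m\<close> with \<open>x 0 = 0\<close>.\<close>
primrec shift_coeffs ::
  "(nat \<Rightarrow> complex) \<Rightarrow> (nat \<Rightarrow> complex) \<Rightarrow> (nat \<Rightarrow> complex) \<Rightarrow> (nat \<Rightarrow> complex) \<Rightarrow> nat \<Rightarrow> complex" where
  "shift_coeffs a b w lam 0 = 0"
| "shift_coeffs a b w lam (Suc m) =
     (w m * ab_coeffs a b lam m - shift_coeffs a b w lam m * b m) / a (Suc m)"

lemma ab_coeffs_shift_coeffs:
  assumes "a (Suc m) \<noteq> 0"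
  shows "ab_coeffs a b (shift_coeffs a b w lam) (Suc m) = w m * ab_coeffs a b lam m"
  using assms by (simp add: ab_coeffs_def)

lemma shift_image_shift_coeffs:
  assumes a_nz: "\<And>n. a n \<noteq> 0" and growth: "growth_ab a b < \<infinity>"
    and B: "\<And>n. cmod (lam n) \<le> B" and B': "\<And>n. cmod (shift_coeffs a b w lam n) \<le> B'"
    and r: "represents_ab a b lam f"
  defines "g \<equiv> \<lambda>z. \<Sum>n. shift_coeffs a b w lam n * fab a b n z"
  shows "represents_ab a b (shift_coeffs a b w lam) g \<and> is_shift_image w f g"
proof
  show rg: "represents_ab a b (shift_coeffs a b w lam) g"
    unfolding g_def by (rule represents_ab_suminf[OF growth B'])
  note taylor_g = taylor_coeff_eq_ab_coeffs[OF growth B' rg]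
  show "is_shift_image w f g"
    unfolding is_shift_image_def
  proof
    fix m
    show "taylor_coeff g m = (if m = 0 then 0 else w (m - 1) * taylor_coeff f (m - 1))"
    proof (cases m)
      case 0
      then show ?thesis using taylor_g[of 0] by (simp add: ab_coeffs_def)
    next
      case (Suc k)
      then show ?thesis
        using taylor_g[of m] taylor_coeff_eq_ab_coeffs[OF growth B r, of k]
          ab_coeffs_shift_coeffs[where a = a and m = k, OF a_nz] by simp
    qed
  qed
qed

definition adjacent_max :: "(nat \<Rightarrow> complex) \<Rightarrow> nat \<Rightarrow> real" where
  "adjacent_max lam m = max (cmod (lam m)) (if m = 0 then 0 else cmod (lam (m - 1)))"

lemma adjacent_max_nonneg: "0 \<le> adjacent_max lam m"
  by (simp add: adjacent_max_def le_max_iff_disj)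

lemma adjacent_max_le:
  assumes "\<And>n. cmod (lam n) \<le> B"
  shows "adjacent_max lam m \<le> B"
  using assms[of m] assms[of "m - 1"] order_trans[OF norm_ge_zero assms[of 0]]
  by (simp add: adjacent_max_def)

lemma adjacent_max_tendsto_zero:
  assumes "lam \<longlonglongrightarrow> 0"
  shows "adjacent_max lam \<longlonglongrightarrow> 0"
proof -
  have lim: "(\<lambda>m. cmod (lam m)) \<longlonglongrightarrow> 0" using tendsto_norm_zero[OF assms] .
  then have "(\<lambda>m. if m = 0 then 0 else cmod (lam (m - 1))) \<longlonglongrightarrow> 0"
    by (subst filterlim_sequentially_Suc [symmetric]) simp
  from tendsto_max[OF lim this] show ?thesis unfolding adjacent_max_def by simp
qed

lemma sum_adjacent_max_powr_le:
  assumes p: "0 < p" and sl: "summable (\<lambda>n. cmod (lam n) powr p)"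
  shows "(\<Sum>m<n. adjacent_max lam m powr p) \<le> 2 * (\<Sum>n. cmod (lam n) powr p)"
proof -
  let ?prev = "\<lambda>m. if m = 0 then 0 else cmod (lam (m - 1)) powr p"
  have "adjacent_max lam m powr p \<le> cmod (lam m) powr p + ?prev m" for m
    using p by (cases m) (auto simp: adjacent_max_def max_def)
  then have "(\<Sum>m<n. adjacent_max lam m powr p) \<le> (\<Sum>m<n. cmod (lam m) powr p) + (\<Sum>m<n. ?prev m)"
    by (simp add: sum.distrib[symmetric] sum_mono)
  moreover have "(\<Sum>m<n. cmod (lam m) powr p) \<le> (\<Sum>n. cmod (lam n) powr p)"
    by (rule sum_le_suminf[OF sl]) auto
  moreover have "(\<Sum>m<n. ?prev m) \<le> (\<Sum>n. cmod (lam n) powr p)"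
  proof (cases n)
    case (Suc k)
    have "(\<Sum>m<n. ?prev m) = (\<Sum>m<k. cmod (lam m) powr p)"
      unfolding Suc sum.lessThan_Suc_shift by simp
    also have "\<dots> \<le> (\<Sum>n. cmod (lam n) powr p)" by (rule sum_le_suminf[OF sl]) auto
    finally show ?thesis .
  qed (simp add: suminf_nonneg sl)
  ultimately show ?thesis by linarith
qed

lemma norm_shift_source_le:
  assumes a_nz: "\<And>n. a n \<noteq> 0" and S: "\<And>n. cmod (w n * a n / a (Suc n)) \<le> S"
    and \<rho>M: "\<And>k. cmod (b k / a (Suc k)) \<le> M" and M: "0 \<le> M"
  shows "cmod (w m * ab_coeffs a b lam m / a (Suc m)) \<le> S * (1 + M) * adjacent_max lam m"
proof -
  have S0: "0 \<le> S" using S[of 0] by (meson norm_ge_zero order_trans)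
  show ?thesis
  proof (cases m)
    case 0
    have "cmod (w m * ab_coeffs a b lam m / a (Suc m)) = cmod (w 0 * a 0 / a (Suc 0)) * cmod (lam 0)"
      unfolding 0 ab_coeffs_def by (simp add: norm_mult norm_divide)
    also have "\<dots> \<le> S * adjacent_max lam m"
      using S[of 0] S0 unfolding 0 adjacent_max_def by (intro mult_mono) auto
    also have "\<dots> \<le> S * (1 + M) * adjacent_max lam m"
      using S0 M adjacent_max_nonneg[of lam m] by (simp add: mult_right_mono algebra_simps)
    finally show ?thesis .
  next
    case (Suc k)
    let ?r = "w m * a m / a (Suc m)"
    have "w m * ab_coeffs a b lam m / a (Suc m) = ?r * lam m + ?r * (b k / a (Suc k)) * lam k"
      unfolding Suc ab_coeffs_def using a_nz[of "Suc k"] a_nz[of "Suc (Suc k)"] by (simp add: field_simps)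
    then have "cmod (w m * ab_coeffs a b lam m / a (Suc m))
        \<le> cmod ?r * cmod (lam m) + cmod ?r * cmod (b k / a (Suc k)) * cmod (lam k)"
      by (metis norm_mult norm_triangle_ineq)
    also have "\<dots> \<le> S * adjacent_max lam m + S * M * adjacent_max lam m"
      unfolding adjacent_max_def Suc using S \<rho>M M S0 by (intro add_mono mult_mono) auto
    also have "\<dots> = S * (1 + M) * adjacent_max lam m" by (simp add: algebra_simps)
    finally show ?thesis .
  qed
qed

lemma norm_shift_coeffs_le:
  assumes a_nz: "\<And>n. a n \<noteq> 0" and S: "\<And>n. cmod (w n * a n / a (Suc n)) \<le> S"
    and \<rho>q: "\<And>k. N \<le> k \<Longrightarrow> cmod (b k / a (Suc k)) \<le> q" and \<rho>M: "\<And>k. cmod (b k / a (Suc k)) \<le> M"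
    and q: "0 < q" "q \<le> M"
  shows "cmod (shift_coeffs a b w lam m) \<le> (M / q) ^ N * (S * (1 + M)) * damped_sum q (adjacent_max lam) m"
proof (rule norm_le_damped_sum_if_recursive[OF _ _ adjacent_max_nonneg _ _ \<rho>q \<rho>M q])
  have M: "0 \<le> M" using q by simp
  have "0 \<le> S" using S[of 0] by (meson norm_ge_zero order_trans)
  then show "0 \<le> S * (1 + M)" using M by simp
  fix m
  have "shift_coeffs a b w lam (Suc m)
      = w m * ab_coeffs a b lam m / a (Suc m) - shift_coeffs a b w lam m * (b m / a (Suc m))"
    by (simp add: diff_divide_distrib)
  then have "cmod (shift_coeffs a b w lam (Suc m))
      \<le> cmod (b m / a (Suc m)) * cmod (shift_coeffs a b w lam m) + cmod (w m * ab_coeffs a b lam m / a (Suc m))"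
    by (metis add.commute mult.commute norm_mult norm_triangle_ineq4)
  then show "cmod (shift_coeffs a b w lam (Suc m))
      \<le> cmod (b m / a (Suc m)) * cmod (shift_coeffs a b w lam m) + S * (1 + M) * adjacent_max lam m"
    using norm_shift_source_le[where a = a and b = b and w = w and m = m and lam = lam, OF a_nz S \<rho>M M]
    by linarith
qed simp_all

lemma shift_bounded_c0_if_damped_bound:
  assumes a_nz: "\<And>n. a n \<noteq> 0" and growth: "growth_ab a b < \<infinity>"
    and q: "0 < q" "q < 1" and K: "0 \<le> K"
    and bound: "\<And>lam m. cmod (shift_coeffs a b w lam m) \<le> K * damped_sum q (adjacent_max lam) m"
  shows "shift_bounded_c0 a b w"
  unfolding shift_bounded_c0_def
proof (rule exI[of _ "K / (1 - q)"], intro allI impI)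
  fix lam f assume "in_c0 lam \<and> represents_ab a b lam f"
  then have lim: "lam \<longlonglongrightarrow> 0" and r: "represents_ab a b lam f" unfolding in_c0_def by auto
  obtain B where "\<And>n. cmod (lam n) \<le> B"
    using convergent_imp_Bseq[OF convergentI[OF lim]] unfolding Bseq_def by blast
  then have bdd: "bdd_above (range (\<lambda>n. cmod (lam n)))" by (auto simp: bdd_above_def)
  have lam_le: "\<And>n. cmod (lam n) \<le> sup_norm lam"
    unfolding sup_norm_def by (rule cSUP_upper[OF _ bdd]) simp
  let ?x = "shift_coeffs a b w lam"
  have x_le: "cmod (?x m) \<le> K / (1 - q) * sup_norm lam" for m
  proof -
    have "damped_sum q (adjacent_max lam) m \<le> sup_norm lam / (1 - q)"
      using q by (intro damped_sum_le adjacent_max_nonneg adjacent_max_le[OF lam_le]) auto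
    from mult_left_mono[OF this K] show ?thesis using bound[of lam m] by simp
  qed
  have "?x \<longlonglongrightarrow> 0"
  proof (rule Lim_null_comparison)
    show "\<forall>\<^sub>F m in sequentially. norm (?x m) \<le> K * damped_sum q (adjacent_max lam) m"
      using bound by simp
    show "(\<lambda>m. K * damped_sum q (adjacent_max lam) m) \<longlonglongrightarrow> 0"
      using q by (intro tendsto_mult_right_zero damped_sum_tendsto_zero adjacent_max_nonneg
          adjacent_max_tendsto_zero[OF lim])
  qed
  moreover have "sup_norm ?x \<le> K / (1 - q) * sup_norm lam"
    unfolding sup_norm_def[of ?x] by (rule cSUP_least) (use x_le in auto)
  ultimately show "\<exists>lam' g. in_c0 lam' \<and> represents_ab a b lam' g \<and> is_shift_image w f g
      \<and> sup_norm lam' \<le> K / (1 - q) * sup_norm lam"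
    using shift_image_shift_coeffs[OF a_nz growth lam_le x_le r] unfolding in_c0_def by blast
qed

lemma norm_le_max_one_suminf_powr:
  assumes p: "1 \<le> p" and sl: "summable (\<lambda>n. cmod (lam n) powr p)"
  shows "cmod (lam n) \<le> max 1 (\<Sum>n. cmod (lam n) powr p)"
proof (cases "cmod (lam n) \<le> 1")
  case False
  then have "cmod (lam n) = cmod (lam n) powr 1" by simp
  also have "\<dots> \<le> cmod (lam n) powr p" using False p by (intro powr_mono) auto
  also have "\<dots> \<le> (\<Sum>n. cmod (lam n) powr p)" using sum_le_suminf[OF sl, of "{n}"] by simp
  finally show ?thesis by simp
qed simp

lemma lp_norm_le_if_partial_sums_le:
  assumes p: "0 < p" and Z: "\<And>n. (\<Sum>m<n. cmod (x m) powr p) \<le> Z"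
  shows "in_lp p x" "lp_norm p x \<le> Z powr (1 / p)"
proof -
  show xs: "in_lp p x"
    unfolding in_lp_def by (rule summableI_nonneg_bounded[where x = Z]) (auto intro: Z)
  show "lp_norm p x \<le> Z powr (1 / p)"
    using xs p unfolding lp_norm_def in_lp_def
    by (intro powr_mono2 suminf_le_const[OF _ Z] suminf_nonneg) auto
qed

lemma shift_bounded_lp_if_damped_bound:
  assumes a_nz: "\<And>n. a n \<noteq> 0" and growth: "growth_ab a b < \<infinity>"
    and q: "0 < q" "q < 1" and K: "0 \<le> K" and p: "1 \<le> p"
    and bound: "\<And>lam m. cmod (shift_coeffs a b w lam m) \<le> K * damped_sum q (adjacent_max lam) m"
  shows "shift_bounded_lp p a b w"
  unfolding shift_bounded_lp_def
proof (rule exI[of _ "(K powr p * 2 / (1 - q) powr p) powr (1 / p)"], intro allI impI)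
  fix lam f assume "in_lp p lam \<and> represents_ab a b lam f"
  then have sl: "summable (\<lambda>n. cmod (lam n) powr p)" and r: "represents_ab a b lam f"
    unfolding in_lp_def by auto
  define \<Sigma> where "\<Sigma> = (\<Sum>n. cmod (lam n) powr p)"
  note lam_le = norm_le_max_one_suminf_powr[OF p sl, folded \<Sigma>_def]
  let ?x = "shift_coeffs a b w lam" and ?T = "damped_sum q (adjacent_max lam)"
  have T0: "0 \<le> ?T m" for m using q by (intro damped_sum_nonneg adjacent_max_nonneg) auto
  have x_le: "cmod (?x n) \<le> K * (max 1 \<Sigma> / (1 - q))" for n
  proof -
    have "?T n \<le> max 1 \<Sigma> / (1 - q)"
      using q by (intro damped_sum_le adjacent_max_nonneg adjacent_max_le[OF lam_le]) auto
    from mult_left_mono[OF this K] show ?thesis using bound[of lam n] by simp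
  qed
  have "(\<Sum>m<n. cmod (?x m) powr p) \<le> (K powr p * 2 / (1 - q) powr p) * \<Sigma>" for n
  proof -
    have "(\<Sum>m<n. cmod (?x m) powr p) \<le> (\<Sum>m<n. K powr p * ?T m powr p)"
      using p K T0 bound by (intro sum_mono) (simp add: powr_mono2 flip: powr_mult)
    also have "\<dots> \<le> K powr p * (2 * \<Sigma> / (1 - q) powr p)"
      unfolding \<Sigma>_def sum_distrib_left[symmetric] using p
      by (intro mult_left_mono sum_damped_sum_powr_le[OF q p adjacent_max_nonneg] sum_adjacent_max_powr_le sl) auto
    finally show ?thesis by (simp add: field_simps)
  qed
  note x_lp = lp_norm_le_if_partial_sums_le[OF _ this]
  have "(K powr p * 2 / (1 - q) powr p * \<Sigma>) powr (1 / p)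
      = (K powr p * 2 / (1 - q) powr p) powr (1 / p) * lp_norm p lam"
    unfolding lp_norm_def \<Sigma>_def by (rule powr_mult)
  then show "\<exists>lam' g. in_lp p lam' \<and> represents_ab a b lam' g \<and> is_shift_image w f g
      \<and> lp_norm p lam' \<le> (K powr p * 2 / (1 - q) powr p) powr (1 / p) * lp_norm p lam"
    using shift_image_shift_coeffs[OF a_nz growth lam_le x_le r] x_lp p by fastforce
qed

lemma norm_ratio_difference_le:
  assumes a: "a (Suc n) \<noteq> 0"
    and S: "\<And>n. cmod (w n * a n / a (Suc n)) \<le> S" and \<rho>M: "\<And>k. cmod (b k / a (Suc k)) \<le> M"
  shows "cmod (w (n + 1) * (b n / a (n + 2)) - w n * (a n / a (n + 1)) * (b (n + 1) / a (n + 2)))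
    \<le> 2 * S * M"
proof -
  have S0: "0 \<le> S" using S[of 0] by (meson norm_ge_zero order_trans)
  have "w (n + 1) * (b n / a (n + 2)) - w n * (a n / a (n + 1)) * (b (n + 1) / a (n + 2))
      = (w (Suc n) * a (Suc n) / a (Suc (Suc n))) * (b n / a (Suc n))
        - (w n * a n / a (Suc n)) * (b (Suc n) / a (Suc (Suc n)))"
    using a by (simp add: field_simps)
  also have "cmod \<dots> \<le> cmod (w (Suc n) * a (Suc n) / a (Suc (Suc n))) * cmod (b n / a (Suc n))
      + cmod (w n * a n / a (Suc n)) * cmod (b (Suc n) / a (Suc (Suc n)))"
    by (metis norm_mult norm_triangle_ineq4)
  also have "\<dots> \<le> S * M + S * M" using S \<rho>M S0 by (intro add_mono mult_mono) auto
  also have "\<dots> = 2 * S * M" by simp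
  finally show ?thesis .
qed

lemma norm_prod_ratios_le:
  assumes \<rho>q: "\<And>k. N \<le> k \<Longrightarrow> cmod (b k / a (Suc k)) \<le> q" and \<rho>M: "\<And>k. cmod (b k / a (Suc k)) \<le> M"
    and q: "0 < q" "q \<le> M"
  shows "cmod (\<Prod>k=3..n. b (j + k - 1) / a (j + k)) \<le> (M / q) ^ N * q ^ (n - 2)"
proof -
  have shift: "(\<Prod>k=3..n. f k) = (\<Prod>i<n - 2. f (i + 3))" for f :: "nat \<Rightarrow> complex"
    by (rule prod.reindex_bij_witness[where i = "\<lambda>i. i + 3" and j = "\<lambda>k. k - 3"]) auto
  have "cmod (\<Prod>k=3..n. b (j + k - 1) / a (j + k))
      = (\<Prod>i<n - 2. cmod (b (j + 2 + i) / a (Suc (j + 2 + i))))"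
    unfolding shift by (simp add: prod_norm numeral_3_eq_3)
  also have "\<dots> \<le> (M / q) ^ N * q ^ (n - 2)"
    by (rule prod_le_if_eventually_le[OF _ \<rho>q \<rho>M q]) simp
  finally show ?thesis .
qed

lemma summable_SUP_le_geometric:
  fixes f :: "nat \<Rightarrow> 'a \<Rightarrow> real"
  assumes f0: "\<And>i j. 0 \<le> f i j" and f_le: "\<And>i j. f i j \<le> C * q ^ i" and q: "0 \<le> q" "q < 1"
  shows "summable (\<lambda>i. SUP j. f i j)"
proof (rule summable_comparison_test')
  show "summable (\<lambda>i. C * q ^ i)" using q by (intro summable_mult summable_geometric) auto
  fix i
  have "(SUP j. f i j) \<le> C * q ^ i" by (rule cSUP_least) (auto intro: f_le)
  moreover have "bdd_above (range (f i))" by (rule bdd_aboveI2[of _ _ "C * q ^ i"]) (rule f_le)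
  then have "0 \<le> (SUP j. f i j)" by (rule cSUP_upper2[of _ _ undefined]) (auto intro: f0)
  ultimately show "norm (SUP j. f i j) \<le> C * q ^ i" by simp
qed

theorem mainTheorem3:
  fixes a b w :: "nat \<Rightarrow> complex"
  assumes a_nz: "\<And>n. a n \<noteq> 0"
    and b_nz: "\<And>n. b n \<noteq> 0"
    and growth: "growth_ab a b < \<infinity>"
    and h1: "bdd_above (range (\<lambda>n. cmod (w n * a n / a (n + 1))))"
    and h2: "limsup (\<lambda>n. ereal (cmod (b n / a (n + 1)))) < 1"
  defines "c \<equiv> (\<lambda>n. w (n + 1) * (b n / a (n + 2))
                     - w n * (a n / a (n + 1)) * (b (n + 1) / a (n + 2)))"
  shows "bdd_above (range (\<lambda>n. cmod (c n)))
    \<and> (\<forall>n\<ge>3. bdd_above (range (\<lambda>j. cmod (c j * (\<Prod>k=3..n. b (j + k - 1) / a (j + k))))))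
    \<and> summable (\<lambda>i. SUP j. cmod (c j * (\<Prod>k=3..i+3. b (j + k - 1) / a (j + k))))
    \<and> (\<forall>p::real. 1 \<le> p \<longrightarrow> shift_bounded_lp p a b w)
    \<and> shift_bounded_c0 a b w"
proof -
  obtain q N M where q: "0 < q" "q < 1" and \<rho>q: "\<And>k. N \<le> k \<Longrightarrow> cmod (b k / a (Suc k)) \<le> q"
    and \<rho>M: "\<And>k. cmod (b k / a (Suc k)) \<le> M" and qM: "q \<le> M"
    using limsup_less_one_obtains_bounds[of "\<lambda>k. cmod (b k / a (Suc k))"] h2 by auto
  obtain S where S: "\<And>n. cmod (w n * a n / a (Suc n)) \<le> S" using h1 by (auto simp: bdd_above_def)
  define K where "K = (M / q) ^ N * (S * (1 + M))"
  have S0: "0 \<le> S" using S[of 0] by (meson norm_ge_zero order_trans)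
  have M0: "0 \<le> M" using q qM by simp
  have c_le: "cmod (c n) \<le> 2 * S * M" for n
    unfolding c_def by (rule norm_ratio_difference_le[where a = a and b = b and w = w, OF a_nz S \<rho>M])
  have c_prod_le: "cmod (c j * (\<Prod>k=3..n. b (j + k - 1) / a (j + k)))
      \<le> 2 * S * M * ((M / q) ^ N * q ^ (n - 2))" for j n
    unfolding norm_mult using S0 M0 c_le norm_prod_ratios_le[where a = a and b = b, OF \<rho>q \<rho>M q(1) qM]
    by (intro mult_mono) auto
  have shift_le: "\<And>lam m. cmod (shift_coeffs a b w lam m) \<le> K * damped_sum q (adjacent_max lam) m"
    unfolding K_def
    by (rule norm_shift_coeffs_le[where a = a and b = b and w = w, OF a_nz S \<rho>q \<rho>M q(1) qM])
  have K0: "0 \<le> K" unfolding K_def using S0 M0 q by simp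
  show ?thesis
  proof (intro conjI allI impI)
    show "bdd_above (range (\<lambda>n. cmod (c n)))" using c_le by (auto simp: bdd_above_def)
    show "bdd_above (range (\<lambda>j. cmod (c j * (\<Prod>k=3..n. b (j + k - 1) / a (j + k)))))" for n
      using c_prod_le by (auto simp: bdd_above_def)
    have "cmod (c j * (\<Prod>k=3..i+3. b (j + k - 1) / a (j + k))) \<le> (2 * S * M * (M / q) ^ N * q) * q ^ i"
      for i j using c_prod_le[of j "i + 3"] by (simp add: mult_ac)
    then show "summable (\<lambda>i. SUP j. cmod (c j * (\<Prod>k=3..i+3. b (j + k - 1) / a (j + k))))"
      using q by (intro summable_SUP_le_geometric) auto
    show "shift_bounded_lp p a b w" if "1 \<le> p" for p
      by (rule shift_bounded_lp_if_damped_bound[OF a_nz growth q K0 that shift_le])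
    show "shift_bounded_c0 a b w" by (rule shift_bounded_c0_if_damped_bound[OF a_nz growth q K0 shift_le])
  qed
qed

end
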